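(* Let $0<p<1$, $q=1-p$, let $\{X_i,i\geq 1\}$ be independent with $P\{X_i=1\}=p$, $P\{X_i=0\}=q$, and write $\lambda=1/\sqrt{pq}$. Let $\varepsilon>0$. Then for almost all $\omega$ there exists a finite $N_0=N_0(\omega,\varepsilon)$ such that for all $N\geq N_0$, $$M_N\geq \left\lfloor \log_{\lambda} N-\log_{\lambda}\log_{\lambda}\log_{\lambda} N+\log_{\lambda}\log_{\lambda} e-\log_{\lambda}2- 1- \varepsilon\right\rfloor .$$
   Context: For $m,n\in\mathbb N$ let $S_n^{(m)}:=\sum_{i=m+1}^{n+m-1}\big[(1-X_{i-1})X_i+X_{i-1}(1-X_i)\big]$ be the number of switches among $X_m,\ldots,X_{m+n-1}$. For $m,N\in\mathbb N$ and $n=1,\ldots,N$ let $H_{m,n}^{(N)}:=\bigcup_{i=m}^{m+N-n+1}\{S_n^{(i)}=n-1\}$, and $M_N^{(m)}:=\max_{1\leq n\leq N}\{n-1 : H_{m,n}^{(N)}\neq\emptyset\}$ (length of the longest consecutive switches in $X_m,\ldots,X_{m+N-1}$). Write $M_N:=M_N^{(1)}$. *)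

theory Defs
  imports "HOL-Probability.Probability"
begin

definition switches :: "(nat \<Rightarrow> 'a \<Rightarrow> real) \<Rightarrow> nat \<Rightarrow> nat \<Rightarrow> 'a \<Rightarrow> real" where
  "switches X n m \<omega> =
     (\<Sum>i\<in>{m+1..n+m-1}. (1 - X (i-1) \<omega>) * X i \<omega> + X (i-1) \<omega> * (1 - X i \<omega>))"

definition Hev :: "(nat \<Rightarrow> 'a \<Rightarrow> real) \<Rightarrow> nat \<Rightarrow> nat \<Rightarrow> nat \<Rightarrow> 'a set" where
  "Hev X m n N = {\<omega>. \<exists>i\<in>{m..m+N-n+1}. switches X n i \<omega> = real n - 1}"

text \<open>M_N^{(m)}: length of the longest run of consecutive switches in X_m..X_{m+N-1}.\<close>
definition longest_switch :: "(nat \<Rightarrow> 'a \<Rightarrow> real) \<Rightarrow> nat \<Rightarrow> nat \<Rightarrow> 'a \<Rightarrow> nat" where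
  "longest_switch X m N \<omega> = Max {n - 1 | n. 1 \<le> n \<and> n \<le> N \<and> \<omega> \<in> Hev X m n N}"

end

(* Write r = sqrt (p q) = 1 / lambda.  Cut X_1, ..., X_N into about N / n^2 blocks of length n^2.
   Inside a block, the events "an alternating run of length n starts at i" (X_{i-1} = X_i, and
   X_i, ..., X_{i+n-1} alternate) have probability at least r^n; two of them are disjoint when they
   overlap and independent otherwise, so by the Bonferroni inequality some block position hosts
   such a run with probability at least n^2 r^n - n^4 r^(2n-2).  Blocks are independent, hence all
   of them fail with probability at most exp (- (N / n^2) (n^2 r^n - n^4 r^(2n-2))).
   Along N_k = lambda^(epsilon k) with n_k - 1 = floor (epsilon k - 1 - log_lambda (2 ln (epsilon k)))
   this is O(k^(-3/2)), so by Borel-Cantelli M_(N_k) >= n_k - 1 eventually; for N_k <= N < N_(k+1)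
   the claimed bound is at most n_k - 1, the loss of one step of the subsequence costing epsilon. *)

theory Submission
  imports Defs "HOL-Real_Asymp.Real_Asymp"
begin

lemma (in prob_space) prob_UN_ge_Bonferroni:
  assumes "finite S" "\<And>i. i \<in> S \<Longrightarrow> A i \<in> events"
  shows "prob (\<Union>i\<in>S. A i) \<ge> (\<Sum>i\<in>S. prob (A i)) - (\<Sum>i\<in>S. \<Sum>j\<in>S-{i}. prob (A i \<inter> A j))"
  using assms
proof (induction S rule: finite_induct)
  case empty
  then show ?case by simp
next
  case (insert a F)
  let ?pairs = "\<lambda>S. \<Sum>i\<in>S. \<Sum>j\<in>S-{i}. prob (A i \<inter> A j)"
  have events: "\<And>i. i \<in> F \<Longrightarrow> A i \<in> events" "A a \<in> events"
    using insert.prems by auto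
  then have UN_events: "(\<Union>i\<in>F. A i) \<in> events"
    using insert.hyps(1) by auto
  have "prob (\<Union>i\<in>insert a F. A i) = prob (A a) + prob (\<Union>i\<in>F. A i) - prob (A a \<inter> (\<Union>i\<in>F. A i))"
    using events UN_events by (subst UN_insert, intro measure_Un3) (auto simp: fmeasurable_eq_sets)
  moreover have "prob (A a \<inter> (\<Union>i\<in>F. A i)) \<le> (\<Sum>j\<in>F. prob (A a \<inter> A j))"
    unfolding Int_UN_distrib using events insert.hyps(1) by (intro measure_UNION_le) auto
  moreover have "(\<Sum>i\<in>insert a F. prob (A i)) = prob (A a) + (\<Sum>i\<in>F. prob (A i))"
    using insert.hyps by simp
  moreover have "?pairs (insert a F) \<ge> (\<Sum>j\<in>F. prob (A a \<inter> A j)) + ?pairs F"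
  proof -
    have "?pairs (insert a F)
        = (\<Sum>j\<in>F. prob (A a \<inter> A j)) + (\<Sum>i\<in>F. \<Sum>j\<in>insert a F-{i}. prob (A i \<inter> A j))"
      using insert.hyps by (simp add: insert_Diff_if)
    moreover have "?pairs F \<le> (\<Sum>i\<in>F. \<Sum>j\<in>insert a F-{i}. prob (A i \<inter> A j))"
      using insert.hyps by (intro sum_mono sum_mono2) auto
    ultimately show ?thesis by linarith
  qed
  moreover have "prob (\<Union>i\<in>F. A i) \<ge> (\<Sum>i\<in>F. prob (A i)) - ?pairs F"
    using insert.IH events by blast
  ultimately show ?case by linarith
qed

lemma block_exponent_ge:
  fixes n N :: nat and x c :: real
  assumes "n \<ge> 2" "x > 0" "c > 0" "real n ^ 2 * x * c \<le> 1"
  shows "real N * x - real N * x / n - real N * real n ^ 2 * x ^ 2 * c - real n ^ 2 * x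
    \<le> real (N div n ^ 2) * (real (n ^ 2 - n) * x - real (n ^ 2 - n) ^ 2 * (x ^ 2 * c))"
proof -
  define B C K where "B = real n ^ 2" and "C = real (n ^ 2 - n)" and "K = real (N div n ^ 2)"
  have "n \<le> n ^ 2" by (simp add: power2_eq_square)
  then have C: "C = B - n" "0 \<le> C" "C \<le> B"
    by (auto simp: B_def C_def of_nat_diff)
  have B: "B > 0" using assms(1) by (simp add: B_def)
  define g where "g = C * x - C ^ 2 * (x ^ 2 * c)"
  have "C * x * c \<le> B * x * c"
    using C(3) assms(2,3) by (simp add: mult.assoc mult_right_mono)
  then have "C * x * c \<le> 1"
    using assms(4) by (simp add: B_def)
  then have "g \<ge> 0"
    unfolding g_def using C(2) assms(2) mult_left_mono[of "C * x * c" 1 "C * x"]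
    by (simp add: power2_eq_square algebra_simps)
  have "real N = K * B + real (N mod n ^ 2)"
    unfolding K_def B_def by (metis of_nat_add of_nat_mult of_nat_power div_mult_mod_eq)
  moreover have "real (N mod n ^ 2) < B"
    using assms(1) by (simp add: B_def flip: of_nat_power)
  ultimately have "K \<ge> N / B - 1"
    using B by (simp add: field_simps)
  then have "K * g \<ge> (N / B - 1) * g"
    using \<open>g \<ge> 0\<close> by (intro mult_right_mono) auto
  moreover have "N / B * (C * x) = real N * x - real N * x / n"
    using assms(1) unfolding C(1) B_def by (simp add: field_simps power2_eq_square)
  moreover have "N / B * (C ^ 2 * (x ^ 2 * c)) \<le> real N * B * x ^ 2 * c"
  proof -
    have "C ^ 2 / B \<le> B"
      using power_mono[OF C(3) C(2), of 2] B by (simp add: field_simps power2_eq_square)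
    then show ?thesis
      using B assms(2,3) mult_right_mono[of "C ^ 2 / B" B "real N * x ^ 2 * c"]
      by (simp add: field_simps)
  qed
  moreover have "g \<le> B * x"
  proof -
    have "C ^ 2 * (x ^ 2 * c) \<ge> 0" using assms(3) by simp
    then show ?thesis
      unfolding g_def using C(3) assms(2) mult_right_mono[of C B x] by linarith
  qed
  ultimately show ?thesis
    unfolding g_def K_def B_def C_def[symmetric] by (simp add: algebra_simps)
qed

lemma exp_neg_power_bounds:
  fixes a s U :: real and n :: nat
  defines "U \<equiv> s - 1 - ln (2 * ln s) / a"
  assumes a: "a > 0" and s: "s > 1" and n: "U \<le> n" "n \<le> U + 1"
  shows "2 * ln s * exp (- a * s) \<le> exp (- a) ^ n"
    and "exp (- a) ^ n \<le> 2 * exp a * ln s * exp (- a * s)"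
proof -
  have x: "exp (- a) ^ n = exp (- a * n)"
    by (simp add: exp_of_nat_mult[symmetric] mult.commute)
  have "ln s > 0" using s by simp
  have "exp (- (a * (U + 1))) \<le> exp (- a) ^ n"
    unfolding x using n(2) a by simp
  moreover have eq: "- (a * (U + 1)) = ln (2 * ln s) + - a * s"
    unfolding U_def using a by (simp add: field_simps)
  have "exp (- (a * (U + 1))) = 2 * ln s * exp (- a * s)"
    unfolding eq using \<open>ln s > 0\<close> by (subst exp_add) simp
  ultimately show "2 * ln s * exp (- a * s) \<le> exp (- a) ^ n" by simp
  have "exp (- a) ^ n \<le> exp (- (a * U))"
    unfolding x using n(1) a by simp
  moreover have eq: "- (a * U) = ln (2 * ln s) + (a + - a * s)"
    unfolding U_def using a by (simp add: field_simps)
  have "exp (- (a * U)) = 2 * exp a * ln s * exp (- a * s)"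
    unfolding eq using \<open>ln s > 0\<close> by (simp only: exp_add) simp
  ultimately show "exp (- a) ^ n \<le> 2 * exp a * ln s * exp (- a * s)" by simp
qed

lemma miss_exponent_ge:
  fixes a s U xh :: real and n N :: nat
  defines "U \<equiv> s - 1 - ln (2 * ln s) / a" and "xh \<equiv> 2 * exp a * ln s * exp (- a * s)"
  assumes a: "a > 0" and s: "s > 1" and n: "n \<ge> 2" "U \<le> n" "n \<le> U + 1"
    and N: "exp (a * s) \<le> N" "N \<le> exp (a * s) + 1"
    and small: "(U + 1) ^ 2 * xh \<le> exp (- 2 * a)"
      "(exp (a * s) + 1) * xh / U + (U + 1) ^ 2 * xh
        + (exp (a * s) + 1) * (U + 1) ^ 2 * xh ^ 2 * exp (2 * a) \<le> 1"
  shows "2 * ln s - 1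
    \<le> real (N div n ^ 2) * (real (n ^ 2 - n) * exp (- a) ^ n
        - real (n ^ 2 - n) ^ 2 * exp (- a) ^ (2 * (n - 1)))"
proof -
  define x where "x = exp (- a) ^ n"
  have "x > 0" by (simp add: x_def)
  have "U \<ge> 1" using n by linarith
  have "x \<ge> 2 * ln s * exp (- a * s)" "x \<le> xh"
    using exp_neg_power_bounds[OF a s] n(2,3) unfolding x_def xh_def U_def by auto
  have "real n ^ 2 \<le> (U + 1) ^ 2"
    using n \<open>U \<ge> 1\<close> by (intro power_mono) auto
  have "real n ^ 2 * x * exp (2 * a) \<le> (U + 1) ^ 2 * xh * exp (2 * a)"
    using \<open>real n ^ 2 \<le> (U + 1) ^ 2\<close> \<open>x \<le> xh\<close> \<open>x > 0\<close> by (intro mult_right_mono mult_mono) auto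
  also have "\<dots> \<le> 1"
    using mult_right_mono[OF small(1), of "exp (2 * a)"] by (simp add: exp_add[symmetric])
  finally have "real N * x - real N * x / n - real N * real n ^ 2 * x ^ 2 * exp (2 * a) - real n ^ 2 * x
      \<le> real (N div n ^ 2) * (real (n ^ 2 - n) * x - real (n ^ 2 - n) ^ 2 * (x ^ 2 * exp (2 * a)))"
    using n(1) \<open>x > 0\<close> by (intro block_exponent_ge) auto
  moreover have power_eq: "exp (- a) ^ (2 * (n - 1)) = x ^ 2 * exp (2 * a)"
  proof -
    have "2 * (n - 1) + 2 = n * 2" using n(1) by simp
    then have "exp (- a) ^ (2 * (n - 1)) * exp (- a) ^ 2 = x ^ 2"
      unfolding x_def power_add[symmetric] power_mult[symmetric] by simp
    then show ?thesis
      by (simp add: field_simps power2_eq_square exp_minus exp_add[symmetric])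
  qed
  moreover have "2 * ln s \<le> real N * x"
  proof -
    have "exp (a * s) * (2 * ln s * exp (- a * s)) \<le> real N * x"
      using N(1) \<open>x \<ge> 2 * ln s * exp (- a * s)\<close> s by (intro mult_mono) auto
    then show ?thesis by (simp add: exp_minus field_simps)
  qed
  moreover have "real N * x / n \<le> (exp (a * s) + 1) * xh / U"
    using N(2) \<open>x \<le> xh\<close> \<open>x > 0\<close> n \<open>U \<ge> 1\<close> by (intro frac_le mult_mono) auto
  moreover have "real N * real n ^ 2 * x ^ 2 * exp (2 * a) \<le> (exp (a * s) + 1) * (U + 1) ^ 2 * xh ^ 2 * exp (2 * a)"
  proof -
    have "real N * real n ^ 2 \<le> (exp (a * s) + 1) * (U + 1) ^ 2"
      using N(2) \<open>real n ^ 2 \<le> (U + 1) ^ 2\<close> by (intro mult_mono) auto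
    moreover have "x ^ 2 \<le> xh ^ 2"
      using \<open>x \<le> xh\<close> \<open>x > 0\<close> by (intro power_mono) auto
    ultimately have "real N * real n ^ 2 * x ^ 2 \<le> (exp (a * s) + 1) * (U + 1) ^ 2 * xh ^ 2"
      by (rule mult_mono) auto
    then show ?thesis
      by (rule mult_right_mono) simp
  qed
  moreover have "real n ^ 2 * x \<le> (U + 1) ^ 2 * xh"
    using \<open>real n ^ 2 \<le> (U + 1) ^ 2\<close> \<open>x \<le> xh\<close> \<open>x > 0\<close> by (intro mult_mono) auto
  ultimately show ?thesis
    using small(2) unfolding power_eq x_def[symmetric] by linarith
qed

lemma eventually_miss_exponent_ge:
  fixes a :: real
  assumes "a > 0"
  shows "\<forall>\<^sub>F s in at_top. 1 < s \<and> 1 \<le> s - 1 - ln (2 * ln s) / a \<and>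
    (\<forall>n N :: nat. 2 \<le> n \<and> s - 1 - ln (2 * ln s) / a \<le> n \<and> n \<le> s - 1 - ln (2 * ln s) / a + 1
      \<and> exp (a * s) \<le> N \<and> N \<le> exp (a * s) + 1 \<longrightarrow>
      2 * ln s - 1 \<le> real (N div n ^ 2) * (real (n ^ 2 - n) * exp (- a) ^ n
        - real (n ^ 2 - n) ^ 2 * exp (- a) ^ (2 * (n - 1))))"
proof -
  have "\<forall>\<^sub>F s in at_top. 1 < (s :: real)" by (rule eventually_gt_at_top)
  moreover have "\<forall>\<^sub>F s in at_top. 1 \<le> s - 1 - ln (2 * ln s) / a"
    using assms by real_asymp
  moreover have "\<forall>\<^sub>F s in at_top.
    (s - 1 - ln (2 * ln s) / a + 1) ^ 2 * (2 * exp a * ln s * exp (- a * s)) \<le> exp (- 2 * a)"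
    using assms by real_asymp
  moreover have "\<forall>\<^sub>F s in at_top.
    (exp (a * s) + 1) * (2 * exp a * ln s * exp (- a * s)) / (s - 1 - ln (2 * ln s) / a)
    + (s - 1 - ln (2 * ln s) / a + 1) ^ 2 * (2 * exp a * ln s * exp (- a * s))
    + (exp (a * s) + 1) * (s - 1 - ln (2 * ln s) / a + 1) ^ 2
      * (2 * exp a * ln s * exp (- a * s)) ^ 2 * exp (2 * a) \<le> 1"
    using assms by real_asymp
  ultimately show ?thesis
  proof eventually_elim
    case (elim s)
    then show ?case
      using miss_exponent_ge[OF assms, of s] by auto
  qed
qed

lemma disjoint_family_on_blocks:
  "disjoint_family_on (\<lambda>k. {k * B + 1..<k * B + B + 1 :: nat}) K"
  unfolding disjoint_family_on_def
proof (intro ballI impI)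
  fix k l :: nat assume "k \<noteq> l"
  moreover have "u * B + B \<le> v * B" if "u < v" for u v
    using that mult_le_mono1[of "Suc u" v B] by simp
  ultimately show "{k * B + 1..<k * B + B + 1} \<inter> {l * B + 1..<l * B + B + 1} = {}"
    by (cases "k < l") (fastforce, force simp: not_less)
qed

locale bernoulli_sequence = prob_space M for M :: "'a measure" +
  fixes X :: "nat \<Rightarrow> 'a \<Rightarrow> real" and p :: real
  assumes p_pos: "0 < p" and p_less_1: "p < 1"
    and indep: "indep_vars (\<lambda>_. borel) X {1..}"
    and prob_X_1: "\<And>i. i \<ge> 1 \<Longrightarrow> prob {\<omega> \<in> space M. X i \<omega> = 1} = p"
    and prob_X_0: "\<And>i. i \<ge> 1 \<Longrightarrow> prob {\<omega> \<in> space M. X i \<omega> = 0} = 1 - p"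
begin

definition var_sets :: "nat \<Rightarrow> 'a set set" where
  "var_sets i = {X i -` A \<inter> space M | A. A \<in> sets borel}"

definition block_sets :: "nat set \<Rightarrow> 'a set set" where
  "block_sets I = sigma_sets (space M) (\<Union>i\<in>I. var_sets i)"

lemma indep_var_sets: "indep_sets var_sets {1..}"
  using indep unfolding indep_vars_def2 var_sets_def by simp

lemma Int_stable_var_sets: "Int_stable (var_sets i)"
proof (rule Int_stableI)
  fix E F assume "E \<in> var_sets i" "F \<in> var_sets i"
  then obtain A B where "A \<in> sets borel" "B \<in> sets borel"
    and "E = X i -` A \<inter> space M" "F = X i -` B \<inter> space M"
    unfolding var_sets_def by blast
  then show "E \<inter> F \<in> var_sets i"
    unfolding var_sets_def by (intro CollectI exI[of _ "A \<inter> B"]) auto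
qed

lemma sigma_algebra_block_sets: "sigma_algebra (space M) (block_sets I)"
  unfolding block_sets_def by (rule sigma_algebra_sigma_sets) (auto simp: var_sets_def)

lemma X_measurable: "i \<ge> 1 \<Longrightarrow> X i \<in> borel_measurable M"
  using indep unfolding indep_vars_def2 by auto

lemma block_sets_subset_events:
  assumes "I \<subseteq> {1..}"
  shows "block_sets I \<subseteq> events"
  unfolding block_sets_def
proof (rule sets.sigma_sets_subset, safe)
  fix E i assume "i \<in> I" "E \<in> var_sets i"
  then show "E \<in> events"
    using assms X_measurable unfolding var_sets_def by (auto intro: measurable_sets)
qed

lemma prob_INT_block_sets:
  assumes "finite K" "K \<noteq> {}" "disjoint_family_on I K" "(\<Union>k\<in>K. I k) \<subseteq> {1..}"
    "\<And>k. k \<in> K \<Longrightarrow> E k \<in> block_sets (I k)"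
  shows "prob (\<Inter>k\<in>K. E k) = (\<Prod>k\<in>K. prob (E k))"
proof -
  have "indep_sets (\<lambda>k. block_sets (I k)) K"
    unfolding block_sets_def
    by (rule indep_sets_collect_sigma[OF indep_sets_mono_index[OF assms(4) indep_var_sets]
          Int_stable_var_sets assms(3)])
  then show ?thesis
    using assms by (intro indep_setsD) auto
qed

lemma prob_Int_block_sets:
  assumes "I \<inter> J = {}" "I \<subseteq> {1..}" "J \<subseteq> {1..}" "E \<in> block_sets I" "F \<in> block_sets J"
  shows "prob (E \<inter> F) = prob E * prob F"
  using prob_INT_block_sets[of "{0, 1::nat}" "\<lambda>k. if k = 0 then I else J" "\<lambda>k. if k = 0 then E else F"]
    assms by (auto simp: disjoint_family_on_def Int_commute)

definition pattern_event :: "nat \<Rightarrow> nat \<Rightarrow> (nat \<Rightarrow> real) \<Rightarrow> 'a set" where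
  "pattern_event i n f = {\<omega> \<in> space M. \<forall>t<n. X (i + t) \<omega> = f t}"

definition pmass :: "real \<Rightarrow> real" where
  "pmass z = (if z = 1 then p else 1 - p)"

lemma vimage_singleton_in_var_sets: "X j -` {c} \<inter> space M \<in> var_sets j"
  unfolding var_sets_def by (intro CollectI exI[of _ "{c}"]) simp

lemma pattern_event_in_block_sets:
  assumes "{i..<i+n} \<subseteq> I"
  shows "pattern_event i n f \<in> block_sets I"
proof -
  interpret sigma_algebra "space M" "block_sets I" by (rule sigma_algebra_block_sets)
  have "{\<omega> \<in> space M. X (i + t) \<omega> = f t} \<in> block_sets I" if "t < n" for t
  proof -
    have "X (i + t) -` {f t} \<inter> space M \<in> block_sets I"
      unfolding block_sets_def using that assms
      by (intro sigma_sets.Basic UN_I[of "i + t"] vimage_singleton_in_var_sets) auto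
    moreover have "X (i + t) -` {f t} \<inter> space M = {\<omega> \<in> space M. X (i + t) \<omega> = f t}" by auto
    ultimately show ?thesis by simp
  qed
  then have "{\<omega> \<in> space M. \<forall>t\<in>{..<n}. X (i + t) \<omega> = f t} \<in> block_sets I" if "n > 0"
    using that by (intro sets_Collect_finite_All') auto
  moreover have "pattern_event i n f = {\<omega> \<in> space M. \<forall>t\<in>{..<n}. X (i + t) \<omega> = f t}"
    unfolding pattern_event_def by auto
  ultimately show ?thesis
    by (cases "n = 0") (auto simp: pattern_event_def)
qed

lemma pattern_event_in_events:
  assumes "i \<ge> 1"
  shows "pattern_event i n f \<in> events"
proof -
  have "{i..<i+n} \<subseteq> {1..}" using assms by auto
  then show ?thesis
    by (meson subsetD block_sets_subset_events pattern_event_in_block_sets order_refl)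
qed

lemma prob_pattern_event:
  assumes "i \<ge> 1" "\<And>t. f t = 0 \<or> f t = 1"
  shows "prob (pattern_event i n f) = (\<Prod>t<n. pmass (f t))"
proof (cases "n = 0")
  case True
  then show ?thesis by (simp add: pattern_event_def prob_space)
next
  case False
  let ?J = "{i..<i+n}" and ?A = "\<lambda>j. X j -` {f (j - i)} \<inter> space M"
  have "pattern_event i n f = (\<Inter>j\<in>?J. ?A j)"
  proof (intro equalityI subsetI)
    fix \<omega> assume \<omega>: "\<omega> \<in> pattern_event i n f"
    have "\<omega> \<in> ?A j" if "j \<in> ?J" for j
      using \<omega> that unfolding pattern_event_def by (auto dest!: spec[of _ "j - i"])
    then show "\<omega> \<in> (\<Inter>j\<in>?J. ?A j)" by blast
  next
    fix \<omega> assume \<omega>: "\<omega> \<in> (\<Inter>j\<in>?J. ?A j)"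
    have "X (i + t) \<omega> = f t" if "t < n" for t
      using INT_D[OF \<omega>, of "i + t"] that by simp
    moreover have "\<omega> \<in> space M" using INT_D[OF \<omega>, of i] False by simp
    ultimately show "\<omega> \<in> pattern_event i n f" unfolding pattern_event_def by simp
  qed
  moreover have "prob (\<Inter>j\<in>?J. ?A j) = (\<Prod>j\<in>?J. prob (?A j))"
  proof (rule indep_setsD[OF indep_var_sets])
    show "\<forall>j\<in>?J. ?A j \<in> var_sets j"
      using vimage_singleton_in_var_sets by blast
  qed (use assms(1) False in auto)
  ultimately have "prob (pattern_event i n f) = (\<Prod>j\<in>?J. prob (?A j))" by simp
  also have "\<dots> = (\<Prod>j\<in>?J. pmass (f (j - i)))"
  proof (intro prod.cong refl)
    fix j assume "j \<in> ?J"
    moreover have "?A j = {\<omega> \<in> space M. X j \<omega> = f (j - i)}" by auto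
    ultimately show "prob (?A j) = pmass (f (j - i))"
      using assms(1) assms(2)[of "j - i"] prob_X_0 prob_X_1 by (auto simp: pmass_def)
  qed
  also have "\<dots> = (\<Prod>t<n. pmass (f t))"
    using prod.shift_bounds_nat_ivl[of "\<lambda>j. pmass (f (j - i))" 0 i n]
    by (simp add: atLeast0LessThan add.commute)
  finally show ?thesis .
qed

definition alt :: "bool \<Rightarrow> nat \<Rightarrow> real" where
  "alt b t = (if even t = b then 1 else 0)"

definition alt_prob :: "bool \<Rightarrow> nat \<Rightarrow> real" where
  "alt_prob b n = (\<Prod>t<n. pmass (alt b t))"

definition alternating_window :: "nat \<Rightarrow> nat \<Rightarrow> 'a set" where
  "alternating_window n i = pattern_event i n (alt True) \<union> pattern_event i n (alt False)"

text \<open>Because \<open>0 - 1 = 0\<close> in \<open>nat\<close>, \<open>alt_run n i b\<close> also forces \<open>X (i - 1) = X i\<close>: an alternating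
  run of length \<open>n\<close> begins exactly at \<open>i\<close>.  This makes such events for nearby \<open>i\<close> disjoint.\<close>

definition alt_run :: "nat \<Rightarrow> nat \<Rightarrow> bool \<Rightarrow> 'a set" where
  "alt_run n i b = pattern_event (i - 1) (Suc n) (\<lambda>t. alt b (t - 1))"

definition alt_run_start :: "nat \<Rightarrow> nat \<Rightarrow> 'a set" where
  "alt_run_start n i = alt_run n i True \<union> alt_run n i False"

definition r :: real where
  "r = sqrt (p * (1 - p))"

lemma alt_eq_0_or_1: "alt b t = 0 \<or> alt b t = 1"
  by (simp add: alt_def)

lemma alt_Suc: "alt b (Suc t) = 1 - alt b t"
  by (simp add: alt_def)

lemma alt_prob_even: "alt_prob b (2 * k) = (p * (1 - p)) ^ k"
proof (induction k)
  case 0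
  then show ?case by (simp add: alt_prob_def)
next
  case (Suc k)
  have "pmass (alt b (2 * k)) * pmass (alt b (Suc (2 * k))) = p * (1 - p)"
    by (cases b) (auto simp: alt_def pmass_def)
  then show ?case
    using Suc.IH by (simp add: alt_prob_def mult.assoc)
qed

lemma alt_prob_odd: "alt_prob b (Suc (2 * k)) = (p * (1 - p)) ^ k * (if b then p else 1 - p)"
  using alt_prob_even[of b k] by (cases b) (auto simp: alt_prob_def alt_def pmass_def)

lemma r_squared: "r\<^sup>2 = p * (1 - p)"
  using p_pos p_less_1 by (simp add: r_def)

lemma r_pos: "r > 0"
  using p_pos p_less_1 by (simp add: r_def)

lemma r_le_half: "r \<le> 1 / 2"
proof (rule power2_le_imp_le)
  have "0 \<le> (p - 1 / 2)\<^sup>2" by simp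
  then show "r\<^sup>2 \<le> (1 / 2)\<^sup>2"
    unfolding r_squared by (simp add: power2_eq_square algebra_simps)
qed simp

lemma alt_run_in_events: "i \<ge> 2 \<Longrightarrow> alt_run n i b \<in> events"
  unfolding alt_run_def by (intro pattern_event_in_events) auto

lemma alt_run_start_in_events: "i \<ge> 2 \<Longrightarrow> alt_run_start n i \<in> events"
  unfolding alt_run_start_def using alt_run_in_events by auto

lemma alternating_window_in_events: "i \<ge> 1 \<Longrightarrow> alternating_window n i \<in> events"
  unfolding alternating_window_def using pattern_event_in_events by auto

lemma alternating_window_in_block_sets:
  assumes "{i..<i+n} \<subseteq> I"
  shows "alternating_window n i \<in> block_sets I"
proof -
  interpret sigma_algebra "space M" "block_sets I" by (rule sigma_algebra_block_sets)
  show ?thesis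
    unfolding alternating_window_def using pattern_event_in_block_sets assms by auto
qed

lemma prob_alt_run_start:
  assumes "i \<ge> 2"
  shows "prob (alt_run_start n i) = p * alt_prob True n + (1 - p) * alt_prob False n"
proof -
  have prob_alt_run: "prob (alt_run n i b) = pmass (alt b 0) * alt_prob b n" for b
  proof -
    have "prob (alt_run n i b) = (\<Prod>t<Suc n. pmass (alt b (t - 1)))"
      unfolding alt_run_def using assms alt_eq_0_or_1 by (intro prob_pattern_event) auto
    then show ?thesis
      unfolding prod.lessThan_Suc_shift alt_prob_def by simp
  qed
  have "alt_run n i True \<inter> alt_run n i False = {}"
    by (auto simp: alt_run_def pattern_event_def alt_def dest: spec[of _ 0])
  then have "prob (alt_run_start n i) = prob (alt_run n i True) + prob (alt_run n i False)"
    unfolding alt_run_start_def using alt_run_in_events assms by (intro finite_measure_Union) auto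
  then show ?thesis
    unfolding prob_alt_run by (simp add: alt_def pmass_def)
qed

lemma prob_alt_run_start_ge:
  assumes "i \<ge> 2"
  shows "prob (alt_run_start n i) \<ge> r ^ n"
proof (cases "even n")
  case True
  then obtain k where n: "n = 2 * k" by (auto elim: evenE)
  have "prob (alt_run_start n i) = p * (p * (1 - p)) ^ k + (1 - p) * (p * (1 - p)) ^ k"
    using prob_alt_run_start[OF assms] by (simp add: n alt_prob_even)
  also have "\<dots> = r ^ n"
    unfolding n power_mult r_squared by (simp add: algebra_simps)
  finally show ?thesis by simp
next
  case False
  then obtain k where n: "n = Suc (2 * k)" by (auto elim: oddE)
  have "prob (alt_run_start n i) = p * alt_prob True n + (1 - p) * alt_prob False n"
    by (rule prob_alt_run_start[OF assms])
  also have "\<dots> = (p * (1 - p)) ^ k * (p\<^sup>2 + (1 - p)\<^sup>2)"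
    unfolding n alt_prob_odd by (simp add: algebra_simps power2_eq_square)
  finally have "prob (alt_run_start n i) = (p * (1 - p)) ^ k * (p\<^sup>2 + (1 - p)\<^sup>2)" .
  moreover have "r ^ n = (p * (1 - p)) ^ k * r"
    unfolding n power_Suc power_mult r_squared by simp
  moreover have "r \<le> p\<^sup>2 + (1 - p)\<^sup>2"
  proof -
    have "0 \<le> (p - 1 / 2)\<^sup>2" by simp
    then have "p\<^sup>2 + (1 - p)\<^sup>2 \<ge> 1 / 2" by (simp add: power2_eq_square algebra_simps)
    then show ?thesis using r_le_half by linarith
  qed
  moreover have "(p * (1 - p)) ^ k \<ge> 0" using p_pos p_less_1 by simp
  ultimately show ?thesis by (simp add: mult_left_mono)
qed

lemma prob_alternating_window_le:
  assumes "i \<ge> 1" "n \<ge> 1"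
  shows "prob (alternating_window n i) \<le> r ^ (n - 1)"
proof -
  have "prob (alternating_window n i) \<le> alt_prob True n + alt_prob False n"
    using measure_Un_le[of "pattern_event i n (alt True)" M "pattern_event i n (alt False)"]
      pattern_event_in_events assms(1) alt_eq_0_or_1
    unfolding alternating_window_def alt_prob_def by (simp add: prob_pattern_event)
  also have "\<dots> \<le> r ^ (n - 1)"
  proof (cases "even n")
    case True
    then obtain k where k: "n = 2 * k" by (auto elim: evenE)
    have "alt_prob True n + alt_prob False n = 2 * r ^ n"
      unfolding k alt_prob_even power_mult r_squared by simp
    also have "\<dots> = (2 * r) * r ^ (n - 1)"
      using assms(2) by (simp add: power_eq_if)
    also have "\<dots> \<le> r ^ (n - 1)"
      using r_le_half r_pos by (simp add: mult_le_cancel_right1)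
    finally show ?thesis .
  next
    case False
    then obtain k where k: "n = Suc (2 * k)" by (auto elim: oddE)
    have "alt_prob True n + alt_prob False n = (p * (1 - p)) ^ k"
      unfolding k alt_prob_odd by (simp add: algebra_simps)
    also have "\<dots> = r ^ (n - 1)"
      unfolding k r_squared[symmetric] by (simp add: power_mult)
    finally show ?thesis by simp
  qed
  finally show ?thesis .
qed

lemma alt_run_start_subset_alternating_window:
  assumes "i \<ge> 2"
  shows "alt_run_start n i \<subseteq> alternating_window n i"
proof -
  have "alt_run n i b \<subseteq> pattern_event i n (alt b)" for b
  proof
    fix \<omega> assume "\<omega> \<in> alt_run n i b"
    then have "X (i - 1 + Suc t) \<omega> = alt b t" if "t < n" for t
      using that by (auto simp: alt_run_def pattern_event_def dest!: spec[of _ "Suc t"])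
    then show "\<omega> \<in> pattern_event i n (alt b)"
      using \<open>\<omega> \<in> alt_run n i b\<close> assms by (auto simp: alt_run_def pattern_event_def)
  qed
  then show ?thesis
    unfolding alt_run_start_def alternating_window_def by blast
qed

lemma alt_run_starts_disjoint:
  assumes "i \<ge> 2" "i < j" "j < i + n"
  shows "alt_run_start n i \<inter> alt_run_start n j = {}"
proof -
  have False if "\<omega> \<in> alt_run n i b" "\<omega> \<in> alt_run n j b'" for \<omega> b b'
  proof -
    have i: "X (i - 1 + t) \<omega> = alt b (t - 1)" if "t < Suc n" for t
      using \<open>\<omega> \<in> alt_run n i b\<close> that by (auto simp: alt_run_def pattern_event_def)
    have j: "X (j - 1 + t) \<omega> = alt b' (t - 1)" if "t < Suc n" for t
      using \<open>\<omega> \<in> alt_run n j b'\<close> that by (auto simp: alt_run_def pattern_event_def)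
    \<comment> \<open>the run from \<open>i\<close> switches between \<open>j - 1\<close> and \<open>j\<close>, the run from \<open>j\<close> does not\<close>
    have "X (j - 1) \<omega> = X j \<omega>"
      using j[of 0] j[of 1] assms by simp
    moreover have "X (j - 1) \<omega> = alt b (j - i - 1)" and "X j \<omega> = alt b (Suc (j - i - 1))"
      using i[of "j - i"] i[of "j - i + 1"] assms by (simp_all add: Suc_diff_le Suc_diff_Suc)
    ultimately show False
      using alt_eq_0_or_1[of b "j - i - 1"] unfolding alt_Suc by auto
  qed
  then show ?thesis
    unfolding alt_run_start_def by blast
qed

lemma prob_alt_run_start_pair_le:
  assumes "i \<ge> 2" "j \<ge> 2" "i \<noteq> j" "n \<ge> 1"
  shows "prob (alt_run_start n i \<inter> alt_run_start n j) \<le> r ^ (2 * (n - 1))"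
proof -
  have ordered: "prob (alt_run_start n i \<inter> alt_run_start n j) \<le> r ^ (2 * (n - 1))"
    if "2 \<le> i" "i < j" for i j
  proof (cases "j < i + n")
    case True
    then show ?thesis
      using alt_run_starts_disjoint that r_pos by simp
  next
    case False
    let ?A = "alternating_window n i" and ?B = "alternating_window n j"
    have "alt_run_start n i \<inter> alt_run_start n j \<subseteq> ?A \<inter> ?B"
      using alt_run_start_subset_alternating_window[of i n]
        alt_run_start_subset_alternating_window[of j n] that by auto
    then have "prob (alt_run_start n i \<inter> alt_run_start n j) \<le> prob (?A \<inter> ?B)"
      using alternating_window_in_events that by (intro finite_measure_mono) auto
    also have "\<dots> = prob ?A * prob ?B"
    proof (rule prob_Int_block_sets)
      show "?A \<in> block_sets {i..<i + n}" "?B \<in> block_sets {j..<j + n}"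
        by (simp_all add: alternating_window_in_block_sets)
    qed (use False that in auto)
    also have "\<dots> \<le> r ^ (n - 1) * r ^ (n - 1)"
      using prob_alternating_window_le that assms(4) r_pos by (intro mult_mono) auto
    finally show ?thesis
      by (simp add: power_add[symmetric] mult_2)
  qed
  show ?thesis
  proof (cases "i < j")
    case False
    then show ?thesis
      using ordered[of j i] assms by (simp add: Int_commute)
  qed (use ordered assms in auto)
qed

text \<open>Block \<open>k\<close> consists of the indices \<open>k B + 1, \<dots>, k B + B\<close>; \<open>block_starts n B k\<close> are the \<open>i\<close>
  for which \<open>alt_run_start n i\<close> only depends on variables in that block.\<close>

definition block_starts :: "nat \<Rightarrow> nat \<Rightarrow> nat \<Rightarrow> nat set" where
  "block_starts n B k = {k * B + 2..<k * B + B - n + 2}"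

definition block_hit :: "nat \<Rightarrow> nat \<Rightarrow> nat \<Rightarrow> 'a set" where
  "block_hit n B k = (\<Union>i\<in>block_starts n B k. alt_run_start n i)"

definition all_blocks_miss :: "nat \<Rightarrow> nat \<Rightarrow> nat \<Rightarrow> 'a set" where
  "all_blocks_miss N n B = space M \<inter> (\<Inter>k<N div B. space M - block_hit n B k)"

lemma block_starts_ge_2: "i \<in> block_starts n B k \<Longrightarrow> i \<ge> 2"
  unfolding block_starts_def by simp

lemma block_hit_in_events: "block_hit n B k \<in> events"
  unfolding block_hit_def block_starts_def using alt_run_start_in_events by auto

lemma all_blocks_miss_in_events: "all_blocks_miss N n B \<in> events"
  unfolding all_blocks_miss_def using block_hit_in_events by auto

lemma block_hit_in_block_sets:
  assumes "n < B"
  shows "block_hit n B k \<in> block_sets {k * B + 1..<k * B + B + 1}"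
proof -
  interpret sigma_algebra "space M" "block_sets {k * B + 1..<k * B + B + 1}"
    by (rule sigma_algebra_block_sets)
  have "alt_run n i b \<in> block_sets {k * B + 1..<k * B + B + 1}" if "i \<in> block_starts n B k" for i b
    unfolding alt_run_def using that assms
    by (intro pattern_event_in_block_sets) (auto simp: block_starts_def)
  then have "alt_run_start n i \<in> block_sets {k * B + 1..<k * B + B + 1}"
    if "i \<in> block_starts n B k" for i
    unfolding alt_run_start_def using that by blast
  moreover have "finite (block_starts n B k)"
    by (simp add: block_starts_def)
  ultimately show ?thesis
    unfolding block_hit_def by blast
qed

lemma prob_block_hit_ge:
  assumes "n \<ge> 1" "n < B"
  shows "prob (block_hit n B k) \<ge> real (B - n) * r ^ n - real (B - n) ^ 2 * r ^ (2 * (n - 1))"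
proof -
  let ?S = "block_starts n B k" and ?c = "r ^ (2 * (n - 1))"
  have S: "finite ?S" "card ?S = B - n"
    using assms by (auto simp: block_starts_def)
  have "prob (block_hit n B k)
      \<ge> (\<Sum>i\<in>?S. prob (alt_run_start n i))
        - (\<Sum>i\<in>?S. \<Sum>j\<in>?S-{i}. prob (alt_run_start n i \<inter> alt_run_start n j))"
    unfolding block_hit_def using S alt_run_start_in_events block_starts_ge_2
    by (intro prob_UN_ge_Bonferroni) auto
  moreover have "(\<Sum>i\<in>?S. prob (alt_run_start n i)) \<ge> real (B - n) * r ^ n"
    using sum_mono[of ?S "\<lambda>_. r ^ n"] prob_alt_run_start_ge block_starts_ge_2 S by auto
  moreover have "(\<Sum>j\<in>?S-{i}. prob (alt_run_start n i \<inter> alt_run_start n j)) \<le> real (B - n) * ?c"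
    if "i \<in> ?S" for i
  proof -
    have "(\<Sum>j\<in>?S-{i}. prob (alt_run_start n i \<inter> alt_run_start n j)) \<le> real (card (?S-{i})) * ?c"
      using prob_alt_run_start_pair_le block_starts_ge_2 that assms(1)
      by (intro sum_bounded_above) auto
    also have "\<dots> \<le> real (B - n) * ?c"
      using S card_Diff1_le[of ?S i] r_pos by (intro mult_right_mono) auto
    finally show ?thesis .
  qed
  then have "(\<Sum>i\<in>?S. \<Sum>j\<in>?S-{i}. prob (alt_run_start n i \<inter> alt_run_start n j))
      \<le> real (B - n) ^ 2 * ?c"
    using sum_mono[of ?S _ "\<lambda>_. real (B - n) * ?c"] S by (simp add: power2_eq_square mult.assoc)
  ultimately show ?thesis by linarith
qed

lemma prob_all_blocks_miss_le:
  assumes "n \<ge> 1" "n < B"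
  shows "prob (all_blocks_miss N n B)
    \<le> exp (- (real (N div B) * (real (B - n) * r ^ n - real (B - n) ^ 2 * r ^ (2 * (n - 1)))))"
proof (cases "N div B = 0")
  case True
  then show ?thesis by (simp add: all_blocks_miss_def)
next
  case False
  let ?K = "{..<N div B}" and ?I = "\<lambda>k. {k * B + 1..<k * B + B + 1}"
    and ?g = "real (B - n) * r ^ n - real (B - n) ^ 2 * r ^ (2 * (n - 1))"
  have "all_blocks_miss N n B = (\<Inter>k\<in>?K. space M - block_hit n B k)"
    using False unfolding all_blocks_miss_def by auto
  also have "prob \<dots> = (\<Prod>k\<in>?K. prob (space M - block_hit n B k))"
  proof (rule prob_INT_block_sets)
    fix k
    show "space M - block_hit n B k \<in> block_sets (?I k)"
      using block_hit_in_block_sets[OF assms(2), of k] unfolding block_sets_def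
      by (rule sigma_sets.Compl)
  qed (use False disjoint_family_on_blocks in auto)
  also have "\<dots> = (\<Prod>k\<in>?K. 1 - prob (block_hit n B k))"
    using block_hit_in_events by (intro prod.cong refl prob_compl)
  also have "\<dots> \<le> (\<Prod>k\<in>?K. exp (- ?g))"
  proof (intro prod_mono conjI)
    fix k
    have "1 - prob (block_hit n B k) \<le> 1 + (- ?g)"
      using prob_block_hit_ge[OF assms, of k] by linarith
    also have "\<dots> \<le> exp (- ?g)" by (rule exp_ge_add_one_self)
    finally show "1 - prob (block_hit n B k) \<le> exp (- ?g)" .
  qed simp
  also have "\<dots> = exp (- (real (N div B) * ?g))"
    by (simp add: exp_of_nat_mult[symmetric] algebra_simps)
  finally show ?thesis .
qed

lemma longest_switch_ge_if_not_all_blocks_miss: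
  assumes "\<omega> \<in> space M" "\<omega> \<notin> all_blocks_miss N n B" "n \<ge> 1" "n < B" "N \<le> N'"
  shows "n - 1 \<le> longest_switch X 1 N' \<omega>"
proof -
  obtain k i b where k: "k < N div B" and i: "i \<in> block_starts n B k" and "\<omega> \<in> alt_run n i b"
    using assms(1,2) unfolding all_blocks_miss_def block_hit_def alt_run_start_def by blast
  then have run: "X (i - 1 + t) \<omega> = alt b (t - 1)" if "t < Suc n" for t
    using that by (auto simp: alt_run_def pattern_event_def)
  have "i \<ge> 2" using block_starts_ge_2 i by simp
  have "Suc k * B \<le> N"
    using k by (metis div_times_less_eq_dividend less_eq_div_iff_mult_less_eq dual_order.trans
        mult_le_mono1 Suc_leI)
  then have "i + n \<le> N + 1"
    using i assms(4) unfolding block_starts_def by auto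
  have "switches X n i \<omega> = (\<Sum>l\<in>{i+1..n+i-1}. 1)"
    unfolding switches_def
  proof (intro sum.cong refl)
    fix l assume l: "l \<in> {i+1..n+i-1}"
    have "X (l - 1) \<omega> = alt b (l - i - 1)" and "X l \<omega> = alt b (Suc (l - i - 1))"
      using run[of "l - i"] run[of "l - i + 1"] l \<open>i \<ge> 2\<close> by (auto simp: Suc_diff_Suc)
    then show "(1 - X (l - 1) \<omega>) * X l \<omega> + X (l - 1) \<omega> * (1 - X l \<omega>) = 1"
      using alt_eq_0_or_1[of b "l - i - 1"] by (auto simp: alt_Suc)
  qed
  also have "\<dots> = real n - 1"
    using assms(3) by (simp add: of_nat_diff)
  finally have "\<omega> \<in> Hev X 1 n N'"
    unfolding Hev_def using \<open>i \<ge> 2\<close> \<open>i + n \<le> N + 1\<close> assms(5) by (auto intro!: bexI[of _ i])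
  moreover have "n \<le> N'"
    using \<open>i + n \<le> N + 1\<close> \<open>i \<ge> 2\<close> assms(5) by simp
  ultimately show ?thesis
    unfolding longest_switch_def using assms(3)
    by (intro Max_ge) (auto intro: finite_subset[of _ "{..N'}"])
qed

end

locale switch_run_bound = bernoulli_sequence +
  fixes lam \<epsilon> :: real
  assumes lam_eq: "lam = 1 / sqrt (p * (1 - p))" and eps_pos: "\<epsilon> > 0"
begin

definition run_target :: "real \<Rightarrow> real" where
  "run_target s = s - 1 - log lam (2 * ln s)"

definition run_len :: "nat \<Rightarrow> nat" where
  "run_len k = nat \<lfloor>run_target (\<epsilon> * k)\<rfloor> + 1"

definition sample_size :: "nat \<Rightarrow> nat" where
  "sample_size k = nat \<lceil>lam powr (\<epsilon> * k)\<rceil>"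

definition miss_event :: "nat \<Rightarrow> 'a set" where
  "miss_event k = all_blocks_miss (sample_size k) (run_len k) (run_len k ^ 2)"

definition switch_bound :: "nat \<Rightarrow> real" where
  "switch_bound N = log lam N - log lam (log lam (log lam N)) + log lam (log lam (exp 1))
    - log lam 2 - 1 - \<epsilon>"

lemma lam_gt_1: "lam > 1"
  using r_le_half r_pos unfolding lam_eq r_def[symmetric] by (simp add: field_simps)

lemma exp_neg_ln_lam: "exp (- ln lam) = r"
  using lam_gt_1 r_pos unfolding lam_eq r_def[symmetric] by (simp add: exp_minus ln_div)

lemma lam_powr: "lam powr s = exp (ln lam * s)"
  using lam_gt_1 by (simp add: powr_def mult.commute)

lemma run_len_bounds:
  assumes "1 \<le> run_target (\<epsilon> * k)"
  shows "run_target (\<epsilon> * k) \<le> run_len k" "run_len k \<le> run_target (\<epsilon> * k) + 1"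
    "run_len k \<ge> 2" "int (run_len k) - 1 = \<lfloor>run_target (\<epsilon> * k)\<rfloor>"
proof -
  have "\<lfloor>run_target (\<epsilon> * k)\<rfloor> \<ge> 1" using assms by linarith
  then have "int (run_len k) = \<lfloor>run_target (\<epsilon> * k)\<rfloor> + 1"
    unfolding run_len_def by simp
  then show "run_target (\<epsilon> * k) \<le> run_len k" "run_len k \<le> run_target (\<epsilon> * k) + 1"
    "run_len k \<ge> 2" "int (run_len k) - 1 = \<lfloor>run_target (\<epsilon> * k)\<rfloor>"
    using \<open>\<lfloor>run_target (\<epsilon> * k)\<rfloor> \<ge> 1\<close> floor_correct[of "run_target (\<epsilon> * k)"] by linarith+
qed

lemma sample_size_bounds:
  "lam powr (\<epsilon> * k) \<le> sample_size k" "sample_size k \<le> lam powr (\<epsilon> * k) + 1"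
proof -
  have "real (sample_size k) = \<lceil>lam powr (\<epsilon> * k)\<rceil>"
    unfolding sample_size_def by simp
  then show "lam powr (\<epsilon> * k) \<le> sample_size k" "sample_size k \<le> lam powr (\<epsilon> * k) + 1"
    using ceiling_correct[of "lam powr (\<epsilon> * k)"] by linarith+
qed

lemma eventually_prob_miss_le:
  "\<forall>\<^sub>F k in sequentially. 1 < \<epsilon> * k \<and> 1 \<le> run_target (\<epsilon> * k) \<and> prob (miss_event k) \<le> k powr (- 3 / 2)"
proof -
  have "\<forall>\<^sub>F s in at_top. 1 < s \<and> 1 \<le> run_target s \<and>
    (\<forall>n N :: nat. 2 \<le> n \<and> run_target s \<le> n \<and> n \<le> run_target s + 1
      \<and> lam powr s \<le> N \<and> N \<le> lam powr s + 1 \<longrightarrow>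
      2 * ln s - 1 \<le> real (N div n ^ 2) * (real (n ^ 2 - n) * r ^ n - real (n ^ 2 - n) ^ 2 * r ^ (2 * (n - 1))))"
    (is "\<forall>\<^sub>F s in at_top. ?P s")
    using eventually_miss_exponent_ge[of "ln lam"] lam_gt_1
    unfolding run_target_def log_def lam_powr exp_neg_ln_lam by simp
  moreover have "filterlim (\<lambda>k. \<epsilon> * real k) at_top sequentially"
    using eps_pos by (intro filterlim_tendsto_pos_mult_at_top[OF tendsto_const] filterlim_real_sequentially)
  ultimately have "\<forall>\<^sub>F k in sequentially. ?P (\<epsilon> * real k)"
    by (rule eventually_compose_filterlim)
  moreover have "\<forall>\<^sub>F x in at_top. 3 / 2 * ln x \<le> 2 * ln (\<epsilon> * x) - 1"
    using eps_pos by real_asymp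
  then have "\<forall>\<^sub>F k in sequentially. 3 / 2 * ln (real k) \<le> 2 * ln (\<epsilon> * k) - 1"
    using filterlim_real_sequentially by (rule eventually_compose_filterlim)
  moreover have "\<forall>\<^sub>F k in sequentially. k > (0 :: nat)"
    by (rule eventually_gt_at_top)
  ultimately show ?thesis
  proof eventually_elim
    case (elim k)
    let ?n = "run_len k" and ?N = "sample_size k"
    let ?g = "real (?N div ?n ^ 2) * (real (?n ^ 2 - ?n) * r ^ ?n
        - real (?n ^ 2 - ?n) ^ 2 * r ^ (2 * (?n - 1)))"
    have "2 * ln (\<epsilon> * k) - 1 \<le> ?g"
      using elim(1) run_len_bounds[of k] sample_size_bounds[of k] by blast
    have "?n \<ge> 2"
      using run_len_bounds(3)[of k] elim(1) by simp
    then have "prob (miss_event k) \<le> exp (- ?g)"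
      unfolding miss_event_def by (intro prob_all_blocks_miss_le) (auto simp: power2_eq_square)
    also have "\<dots> \<le> exp (- (2 * ln (\<epsilon> * k) - 1))"
      using \<open>2 * ln (\<epsilon> * k) - 1 \<le> ?g\<close> by simp
    also have "\<dots> \<le> exp (- (3 / 2 * ln (real k)))"
      using elim(2) by simp
    also have "\<dots> = k powr (- 3 / 2)"
      using elim(3) by (simp add: powr_def)
    finally show ?case
      using elim(1) by simp
  qed
qed

lemma AE_eventually_not_miss: "AE \<omega> in M. \<forall>\<^sub>F k in sequentially. \<omega> \<notin> miss_event k"
proof -
  have "summable (\<lambda>k. prob (miss_event k))"
  proof (rule summable_comparison_test_ev)
    show "\<forall>\<^sub>F k in sequentially. norm (prob (miss_event k)) \<le> real k powr (- 3 / 2)"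
      using eventually_prob_miss_le by eventually_elim simp
  qed (simp add: summable_real_powr_iff)
  then have "AE \<omega> in M. \<forall>\<^sub>F k in sequentially. \<omega> \<in> space M - miss_event k"
    using all_blocks_miss_in_events unfolding miss_event_def
    by (intro borel_cantelli_AE1) (auto simp: less_top[symmetric])
  then show ?thesis
    by (rule AE_mp) (auto elim: eventually_mono)
qed

lemma switch_bound_le_run_target:
  assumes "1 < \<epsilon> * k" "\<epsilon> * k \<le> log lam N" "log lam N < \<epsilon> * k + \<epsilon>"
  shows "switch_bound N \<le> run_target (\<epsilon> * k)"
proof -
  define s t a where "s = \<epsilon> * k" and "t = log lam N" and "a = ln lam"
  have "a > 0" "ln s > 0" "ln t > 0"
    using assms lam_gt_1 by (auto simp: s_def t_def a_def)
  have "log lam (log lam t) - log lam (log lam (exp 1)) = log lam (ln t)"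
    using \<open>a > 0\<close> \<open>ln t > 0\<close> by (simp add: log_def ln_div a_def[symmetric] field_simps)
  moreover have "log lam (2 * ln s) = log lam 2 + log lam (ln s)"
    using \<open>ln s > 0\<close> lam_gt_1 by (simp add: log_mult)
  moreover have "log lam (ln s) \<le> log lam (ln t)"
    using \<open>ln s > 0\<close> assms lam_gt_1 by (simp add: s_def t_def)
  ultimately show ?thesis
    using assms unfolding switch_bound_def run_target_def s_def[symmetric] t_def[symmetric]
    by linarith
qed

lemma floor_switch_bound_le_longest_switch:
  assumes "\<omega> \<in> space M" "\<omega> \<notin> miss_event k" "1 < \<epsilon> * k" "1 \<le> run_target (\<epsilon> * k)"
    and k: "k = nat \<lfloor>log lam N / \<epsilon>\<rfloor>"
  shows "\<lfloor>switch_bound N\<rfloor> \<le> int (longest_switch X 1 N \<omega>)"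
proof -
  have "k > 0" using assms(3) by (cases k) auto
  then have "real k = \<lfloor>log lam N / \<epsilon>\<rfloor>"
    unfolding k by simp
  then have "k \<le> log lam N / \<epsilon>" "log lam N / \<epsilon> < k + 1"
    using floor_correct[of "log lam N / \<epsilon>"] by linarith+
  then have N: "\<epsilon> * k \<le> log lam N" "log lam N < \<epsilon> * k + \<epsilon>"
    using eps_pos by (simp_all add: field_simps)
  have "N > 0"
    using N(1) assms(3) by (cases N) (auto simp: log_def)
  have "lam powr (\<epsilon> * k) \<le> lam powr (log lam N)"
    using N(1) lam_gt_1 by (intro powr_mono) auto
  then have "sample_size k \<le> N"
    using \<open>N > 0\<close> lam_gt_1 unfolding sample_size_def by (simp add: nat_le_iff ceiling_le_iff)
  then have "run_len k - 1 \<le> longest_switch X 1 N \<omega>"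
    using run_len_bounds(3)[OF assms(4)] assms(1,2) unfolding miss_event_def
    by (intro longest_switch_ge_if_not_all_blocks_miss) (auto simp: power2_eq_square)
  have "\<lfloor>switch_bound N\<rfloor> \<le> \<lfloor>run_target (\<epsilon> * k)\<rfloor>"
    using switch_bound_le_run_target assms(3) N by (intro floor_mono) auto
  also have "\<dots> = int (run_len k) - 1"
    using run_len_bounds(4)[OF assms(4)] by simp
  also have "\<dots> \<le> int (longest_switch X 1 N \<omega>)"
    using \<open>run_len k - 1 \<le> longest_switch X 1 N \<omega>\<close> run_len_bounds(3)[OF assms(4)] by linarith
  finally show ?thesis .
qed

lemma eventually_longest_switch_ge:
  assumes "\<omega> \<in> space M" "\<forall>\<^sub>F k in sequentially. \<omega> \<notin> miss_event k"
  shows "\<forall>\<^sub>F N in sequentially. \<lfloor>switch_bound N\<rfloor> \<le> int (longest_switch X 1 N \<omega>)"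
proof -
  have "filterlim (\<lambda>x. log lam x / \<epsilon>) at_top at_top"
    using lam_gt_1 eps_pos unfolding log_def by real_asymp
  then have "filterlim (\<lambda>N. nat \<lfloor>log lam (real N) / \<epsilon>\<rfloor>) sequentially sequentially"
    by (intro filterlim_compose[OF filterlim_nat_sequentially]
        filterlim_compose[OF filterlim_floor_sequentially] filterlim_compose[OF _ filterlim_real_sequentially])
  with eventually_conj[OF assms(2) eventually_prob_miss_le]
  have "\<forall>\<^sub>F N in sequentially. \<omega> \<notin> miss_event (nat \<lfloor>log lam N / \<epsilon>\<rfloor>)
    \<and> 1 < \<epsilon> * nat \<lfloor>log lam N / \<epsilon>\<rfloor> \<and> 1 \<le> run_target (\<epsilon> * nat \<lfloor>log lam N / \<epsilon>\<rfloor>)"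
    by (auto dest: eventually_compose_filterlim elim: eventually_mono)
  then show ?thesis
    by eventually_elim (use floor_switch_bound_le_longest_switch assms(1) in blast)
qed

end

theorem theorem2p2:
  fixes M :: "'a measure" and X :: "nat \<Rightarrow> 'a \<Rightarrow> real" and p lam \<epsilon> :: real
  assumes "prob_space M"
    and "0 < p" and "p < 1"
    and "prob_space.indep_vars M (\<lambda>_. borel) X {1..}"
    and "\<And>i. i \<ge> 1 \<Longrightarrow> measure M {\<omega> \<in> space M. X i \<omega> = 1} = p"
    and "\<And>i. i \<ge> 1 \<Longrightarrow> measure M {\<omega> \<in> space M. X i \<omega> = 0} = 1 - p"
    and "lam = 1 / sqrt (p * (1 - p))"
    and "\<epsilon> > 0"
  shows "AE \<omega> in M. \<exists>N0. \<forall>N\<ge>N0.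
           int (longest_switch X 1 N \<omega>) \<ge>
           \<lfloor>log lam (real N) - log lam (log lam (log lam (real N)))
             + log lam (log lam (exp 1)) - log lam 2 - 1 - \<epsilon>\<rfloor>"
proof -
  interpret switch_run_bound M X p lam \<epsilon>
    by (intro switch_run_bound.intro bernoulli_sequence.intro bernoulli_sequence_axioms.intro
        switch_run_bound_axioms.intro assms)
  from AE_eventually_not_miss AE_space show ?thesis
  proof eventually_elim
    case (elim \<omega>)
    then have "\<forall>\<^sub>F N in sequentially. \<lfloor>switch_bound N\<rfloor> \<le> int (longest_switch X 1 N \<omega>)"
      by (intro eventually_longest_switch_ge)
    then show ?case
      unfolding eventually_sequentially switch_bound_def .
  qed
qed

end
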